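(* Let $n,d,d_k$ be positive integers, $X\in\mathbb{R}^{n\times d}$, $W_Q,W_K\in\mathbb{R}^{d\times d_k}$, $E\in\mathbb{R}^{n\times n}$, and let $P\in\mathbb{R}^{d\times d}$ be an orthogonal projector. Put $B=W_QW_K^\top$, $X_P=XP$, $G_Q=X^\top E X W_K/\sqrt{d_k}$, $G_K=X^\top E^\top X W_Q/\sqrt{d_k}$, and for $\eta_Q,\eta_K\ge0$ let $B^+=(W_Q-\eta_QG_Q)(W_K-\eta_KG_K)^\top$ and $\Delta Z_P=X_P P(B^+-B)P X_P^\top/\sqrt{d_k}$. Suppose there are constants $\lambda_Q,\lambda_K\ge0$ such that $$\|XW_SW_S^\top P\|_F\le\lambda_S\|X_P\|_F\|W_S\|_{\mathrm{op}}^2,\qquad S\in\{Q,K\}.$$ Then $$\|\Delta Z_P\|_F\le\frac{\|X_P\|_{\mathrm{op}}^2\|X_P\|_F^2\|E\|_{\mathrm{op}}}{d_k}\Big(\eta_Q\lambda_K\|W_K\|_{\mathrm{op}}^2+\eta_K\lambda_Q\|W_Q\|_{\mathrm{op}}^2\Big)+R_2,$$ where $R_2=\eta_Q\eta_K\|X_P\|_{\mathrm{op}}^2\|X_P\|_F^2\|E\|_{\mathrm{op}}^2\|XW_K\|_F\|XW_Q\|_F/d_k^{3/2}$. In particular (using $\|X_P\|_{\mathrm{op}}\le\|X_P\|_F$), the first-order part of $\|\Delta Z_P\|_F$ is at most $\frac{\|X_P\|_F^4\|E\|_{\mathrm{op}}}{d_k}\big(\eta_Q\lambda_K\|W_K\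|_{\mathrm{op}}^2+\eta_K\lambda_Q\|W_Q\|_{\mathrm{op}}^2\big)$.
   Context: $\|\cdot\|_F$ is the Frobenius norm, $\|\cdot\|_{\mathrm{op}}$ the spectral norm; an orthogonal projector satisfies $P=P^\top=P^2$. *)

theory Defs
  imports "HOL-Analysis.Analysis"
begin

definition frob_norm :: "real^'n^'m \<Rightarrow> real" where
  "frob_norm A = sqrt (\<Sum>i\<in>UNIV. \<Sum>j\<in>UNIV. (A $ i $ j)\<^sup>2)"

definition op_norm :: "real^'n^'m \<Rightarrow> real" where
  "op_norm A = onorm (\<lambda>x. A *v x)"

definition orth_projector :: "real^'n^'n \<Rightarrow> bool" where
  "orth_projector P \<longleftrightarrow> transpose P = P \<and> P ** P = P"

end

theory Submission
  imports Defs
begin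

(* Since P is an orthogonal projector, X_P P = X_P and X_P X^T = X_P X_P^T. Expanding
   B^+ - B bilinearly therefore writes sqrt(d_k) Delta Z_P as a b T3 - a T1 - b T2, with
   a = eta_Q / sqrt(d_k), b = eta_K / sqrt(d_k) and
     T1 = X_P X_P^T E (X W_K W_K^T P) X_P^T,
     T2 = X_P (X W_Q W_Q^T P)^T E X_P X_P^T,
     T3 = X_P X_P^T E (X W_K) (X W_Q)^T E X_P X_P^T.
   Each term is bounded by |L M R|_F <= |L|_op |M|_F |R|_op with the Frobenius norm on the
   middle factor: the alignment hypotheses control the middle factors of T1 and T2, and
   |(X W_K)(X W_Q)^T|_F <= |X W_K|_F |X W_Q|_F that of T3. The resulting powers |X_P|_op^3 and
   |X_P|_op^4 are finally weakened to |X_P|_op^2 |X_P|_F^2. *)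

lemma frob_norm_eq_norm: "frob_norm A = norm A"
  unfolding frob_norm_def norm_eq_sqrt_inner inner_vec_def by (simp add: power2_eq_square)

lemma norm_transpose: "norm (transpose (A :: real^'n^'m)) = norm A"
  unfolding frob_norm_eq_norm[symmetric] frob_norm_def transpose_def
  by (subst sum.swap) simp

lemma power2_norm_vec:
  "(norm (x :: 'a::real_normed_vector^'n))\<^sup>2 = (\<Sum>i\<in>UNIV. (norm (x $ i))\<^sup>2)"
  by (simp add: norm_vec_def L2_set_def sum_nonneg)

lemma op_norm_nonneg: "0 \<le> op_norm A"
  unfolding op_norm_def by (rule onorm_pos_le) simp

lemma norm_matrix_vector_mult_le: "norm (A *v x) \<le> op_norm A * norm x"
  unfolding op_norm_def by (rule onorm) simp

lemma op_norm_le_norm: "op_norm (A :: real^'n^'m) \<le> norm A"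
  unfolding op_norm_def
proof (rule onorm_le)
  fix x :: "real^'n"
  have "(norm (A *v x))\<^sup>2 = (\<Sum>i\<in>UNIV. (A $ i \<bullet> x)\<^sup>2)"
    by (simp add: power2_norm_vec matrix_vector_mul_component)
  also have "\<dots> \<le> (\<Sum>i\<in>UNIV. (norm (A $ i) * norm x)\<^sup>2)"
    by (intro sum_mono) (simp add: abs_le_square_iff[symmetric] Cauchy_Schwarz_ineq2)
  also have "\<dots> = (norm A * norm x)\<^sup>2"
    by (simp add: power2_norm_vec[of A] power_mult_distrib sum_distrib_right)
  finally show "norm (A *v x) \<le> norm A * norm x"
    by (rule power2_le_imp_le) simp
qed

lemma norm_matrix_mult_le_op_norm_left:
  "norm ((A :: real^'n^'m) ** (B :: real^'p^'n)) \<le> op_norm A * norm B"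
proof -
  have column: "transpose (A ** B) $ j = A *v (transpose B $ j)" for j
    by (simp add: transpose_def matrix_matrix_mult_def matrix_vector_mult_def vec_eq_iff mult.commute)
  have "(norm (A ** B))\<^sup>2 = (norm (transpose (A ** B)))\<^sup>2"
    by (simp only: norm_transpose)
  also have "\<dots> = (\<Sum>j\<in>UNIV. (norm (A *v (transpose B $ j)))\<^sup>2)"
    by (simp only: power2_norm_vec column)
  also have "\<dots> \<le> (\<Sum>j\<in>UNIV. (op_norm A * norm (transpose B $ j))\<^sup>2)"
    by (intro sum_mono power_mono norm_matrix_vector_mult_le) simp
  also have "\<dots> = (op_norm A * norm B)\<^sup>2"
    by (simp only: power_mult_distrib sum_distrib_left[symmetric] power2_norm_vec[symmetric]
        norm_transpose)
  finally show ?thesis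
    by (rule power2_le_imp_le) (simp add: op_norm_nonneg)
qed

lemma op_norm_transpose_le: "op_norm (transpose (A :: real^'n^'m)) \<le> op_norm A"
  unfolding op_norm_def[of "transpose A"]
proof (rule onorm_le)
  fix y :: "real^'m"
  let ?z = "transpose A *v y"
  have "(norm ?z)\<^sup>2 = y \<bullet> (A *v ?z)"
    by (simp add: power2_norm_eq_inner dot_lmul_matrix)
  also have "\<dots> \<le> norm y * norm (A *v ?z)"
    by (rule norm_cauchy_schwarz)
  also have "\<dots> \<le> norm y * (op_norm A * norm ?z)"
    by (intro mult_left_mono norm_matrix_vector_mult_le norm_ge_zero)
  finally have "norm ?z * norm ?z \<le> (op_norm A * norm y) * norm ?z"
    by (simp add: power2_eq_square mult_ac)
  then show "norm ?z \<le> op_norm A * norm y"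
    using op_norm_nonneg[of A]
    by (cases "norm ?z = 0") (auto dest: mult_right_le_imp_le)
qed

lemma op_norm_transpose: "op_norm (transpose (A :: real^'n^'m)) = op_norm A"
  by (metis op_norm_transpose_le transpose_transpose order_antisym)

lemma norm_matrix_mult_le_op_norm_right:
  "norm ((A :: real^'n^'m) ** (B :: real^'p^'n)) \<le> norm A * op_norm B"
  using norm_matrix_mult_le_op_norm_left[of "transpose B" "transpose A"]
  by (simp add: matrix_transpose_mul[symmetric] norm_transpose op_norm_transpose mult.commute)

lemma norm_matrix_mult_le: "norm ((A :: real^'n^'m) ** (B :: real^'p^'n)) \<le> norm A * norm B"
  by (meson norm_matrix_mult_le_op_norm_right op_norm_le_norm mult_left_mono norm_ge_zero order_trans)

lemma op_norm_matrix_mult_le: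
  "op_norm ((A :: real^'n^'m) ** (B :: real^'p^'n)) \<le> op_norm A * op_norm B"
proof -
  have "(\<lambda>x. (A ** B) *v x) = (\<lambda>x. A *v x) \<circ> (\<lambda>x. B *v x)"
    by (simp add: o_def matrix_vector_mul_assoc)
  then show ?thesis
    unfolding op_norm_def by (metis onorm_compose matrix_vector_mul_bounded_linear)
qed

lemma norm_sandwich_le:
  "norm ((L :: real^'n^'m) ** (M :: real^'p^'n) ** (R :: real^'q^'p))
    \<le> op_norm L * norm M * op_norm R"
  by (meson norm_matrix_mult_le_op_norm_left norm_matrix_mult_le_op_norm_right
      mult_right_mono op_norm_nonneg order_trans)

lemma matrix_diff_ldistrib: "(A :: 'a::ring_1^'n^'m) ** (B - C) = A ** B - A ** C"
  by (simp add: matrix_matrix_mult_def vec_eq_iff sum_subtractf algebra_simps)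

lemma matrix_diff_rdistrib: "((A :: 'a::ring_1^'n^'m) - B) ** C = A ** C - B ** C"
  by (simp add: matrix_matrix_mult_def vec_eq_iff sum_subtractf algebra_simps)

lemma transpose_diff: "transpose (A - B) = transpose A - transpose B"
  by (simp add: transpose_def vec_eq_iff)

lemma matrix_mult_transpose_update:
  fixes W G :: "real^'k^'m" and V H :: "real^'k^'n"
  shows "(W - a *\<^sub>R G) ** transpose (V - b *\<^sub>R H) - W ** transpose V
    = (a * b) *\<^sub>R (G ** transpose H) - a *\<^sub>R (G ** transpose V) - b *\<^sub>R (W ** transpose H)"
  by (simp add: transpose_diff transpose_scalar matrix_diff_ldistrib matrix_diff_rdistrib
      matrix_scalar_ac scalar_matrix_assoc[symmetric] algebra_simps)

lemma orth_projector_mult_absorb: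
  assumes "orth_projector P"
  shows "A ** P ** P = A ** P" and "P ** transpose (X ** P) = transpose (X ** P)"
  using assms unfolding orth_projector_def
  by (metis matrix_mul_assoc, metis matrix_mul_assoc matrix_transpose_mul)

(* For a = eta_Q / sqrt(d_k) and b = eta_K / sqrt(d_k) this is sqrt(d_k) Delta Z_P. *)
definition projected_score_update ::
    "real^'d^'n \<Rightarrow> real^'n^'n \<Rightarrow> real^'d^'d \<Rightarrow> real^'k^'d \<Rightarrow> real^'k^'d \<Rightarrow> real \<Rightarrow> real
      \<Rightarrow> real^'n^'n" where
  "projected_score_update X E P WQ WK a b =
    (X ** P) ** P ** ((WQ - a *\<^sub>R (transpose X ** E ** X ** WK))
      ** transpose (WK - b *\<^sub>R (transpose X ** transpose E ** X ** WQ)) - WQ ** transpose WK)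
      ** P ** transpose (X ** P)"

lemma projected_score_update_eq:
  fixes X :: "real^'d^'n" and WQ WK :: "real^'k^'d" and E :: "real^'n^'n"
  assumes "orth_projector P"
  defines "XP \<equiv> X ** P"
  shows "projected_score_update X E P WQ WK a b
    = (a * b) *\<^sub>R (XP ** transpose XP ** E ** (X ** WK) ** transpose (X ** WQ) ** E ** XP ** transpose XP)
      - a *\<^sub>R (XP ** transpose XP ** E ** (X ** WK ** transpose WK ** P) ** transpose XP)
      - b *\<^sub>R (XP ** transpose (X ** WQ ** transpose WQ ** P) ** E ** XP ** transpose XP)"
proof -
  have "XP ** P ** D ** P ** transpose XP = XP ** D ** transpose XP" for D :: "real^'d^'d"
    using orth_projector_mult_absorb[OF assms(1)] by (metis XP_def matrix_mul_assoc)
  moreover have "transpose P = P"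
    using assms(1) by (simp add: orth_projector_def)
  ultimately show ?thesis
    unfolding projected_score_update_def matrix_mult_transpose_update XP_def
    by (simp add: matrix_diff_ldistrib matrix_diff_rdistrib matrix_scalar_ac
        scalar_matrix_assoc[symmetric] matrix_transpose_mul matrix_mul_assoc
        orth_projector_mult_absorb(1)[OF assms(1)])
qed

lemma op_norm_gram_mult_le:
  "op_norm ((A :: real^'d^'n) ** transpose A ** (E :: real^'m^'n)) \<le> (op_norm A)\<^sup>2 * op_norm E"
proof -
  have "op_norm (A ** transpose A) \<le> (op_norm A)\<^sup>2"
    using op_norm_matrix_mult_le[of A "transpose A"] by (simp add: op_norm_transpose power2_eq_square)
  then show ?thesis
    by (meson op_norm_matrix_mult_le mult_right_mono op_norm_nonneg order_trans)
qed

lemma norm_query_step_term_le: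
  fixes A M :: "real^'d^'n" and E :: "real^'n^'n"
  shows "norm (A ** transpose A ** E ** M ** transpose A) \<le> (op_norm A)^3 * op_norm E * norm M"
proof -
  have "norm (A ** transpose A ** E ** M ** transpose A)
      \<le> op_norm (A ** transpose A ** E) * norm M * op_norm (transpose A)"
    by (rule norm_sandwich_le)
  also have "\<dots> \<le> ((op_norm A)\<^sup>2 * op_norm E) * norm M * op_norm A"
    by (simp add: op_norm_transpose mult_right_mono op_norm_gram_mult_le op_norm_nonneg)
  finally show ?thesis
    by (simp add: power2_eq_square power3_eq_cube mult_ac)
qed

lemma norm_key_step_term_le:
  fixes A M :: "real^'d^'n" and E :: "real^'n^'n"
  shows "norm (A ** transpose M ** E ** A ** transpose A) \<le> (op_norm A)^3 * op_norm E * norm M"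
proof -
  have "transpose (A ** transpose M ** E ** A ** transpose A)
      = A ** transpose A ** transpose E ** M ** transpose A"
    by (simp add: matrix_transpose_mul matrix_mul_assoc)
  then show ?thesis
    using norm_query_step_term_le[of A "transpose E" M] by (metis norm_transpose op_norm_transpose)
qed

lemma norm_cross_term_le:
  fixes A :: "real^'d^'n" and U V :: "real^'k^'n" and E :: "real^'n^'n"
  shows "norm (A ** transpose A ** E ** U ** transpose V ** E ** A ** transpose A)
    \<le> (op_norm A)^4 * (op_norm E)\<^sup>2 * norm U * norm V"
proof -
  have "A ** transpose A ** E ** U ** transpose V ** E ** A ** transpose A
      = (A ** transpose A ** E) ** (U ** transpose V) ** transpose (A ** transpose A ** transpose E)"
    by (simp add: matrix_transpose_mul matrix_mul_assoc)
  also have "norm \<dots> \<le> op_norm (A ** transpose A ** E) * norm (U ** transpose V)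
      * op_norm (A ** transpose A ** transpose E)"
    by (metis norm_sandwich_le op_norm_transpose)
  also have "\<dots> \<le> ((op_norm A)\<^sup>2 * op_norm E) * (norm U * norm V) * ((op_norm A)\<^sup>2 * op_norm E)"
    using op_norm_gram_mult_le[of A "transpose E"] norm_matrix_mult_le[of U "transpose V"]
    by (intro mult_mono op_norm_gram_mult_le)
      (simp_all add: norm_transpose op_norm_transpose op_norm_nonneg)
  finally show ?thesis
    by (simp add: power2_eq_square power4_eq_xxxx mult_ac)
qed

lemma norm_projected_score_update_le:
  fixes X :: "real^'d^'n" and WQ WK :: "real^'k^'d" and E :: "real^'n^'n"
  assumes P: "orth_projector P" and a: "0 \<le> a" and b: "0 \<le> b"
    and lQ: "norm (X ** WQ ** transpose WQ ** P) \<le> lQ * norm (X ** P)"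
    and lK: "norm (X ** WK ** transpose WK ** P) \<le> lK * norm (X ** P)"
  shows "norm (projected_score_update X E P WQ WK a b)
    \<le> (op_norm (X ** P))\<^sup>2 * (norm (X ** P))\<^sup>2
      * (op_norm E * (a * lK + b * lQ) + a * b * (op_norm E)\<^sup>2 * norm (X ** WK) * norm (X ** WQ))"
proof -
  let ?A = "X ** P"
  let ?s = "op_norm ?A" and ?f = "norm ?A"
  let ?T1 = "?A ** transpose ?A ** E ** (X ** WK ** transpose WK ** P) ** transpose ?A"
  let ?T2 = "?A ** transpose (X ** WQ ** transpose WQ ** P) ** E ** ?A ** transpose ?A"
  let ?T3 = "?A ** transpose ?A ** E ** (X ** WK) ** transpose (X ** WQ) ** E ** ?A ** transpose ?A"
  have s: "0 \<le> ?s" "?s \<le> ?f"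
    by (simp_all add: op_norm_nonneg op_norm_le_norm)
  have cube: "?s^3 * m \<le> ?s\<^sup>2 * ?f\<^sup>2 * l" if "0 \<le> m" "m \<le> l * ?f" for m l
  proof -
    have "?s * m \<le> ?f * (l * ?f)"
      using that s by (intro mult_mono) simp_all
    then have "?s\<^sup>2 * (?s * m) \<le> ?s\<^sup>2 * (?f * (l * ?f))"
      by (rule mult_left_mono) simp
    then show ?thesis
      by (simp add: power2_eq_square power3_eq_cube mult_ac)
  qed
  have T1: "norm ?T1 \<le> ?s\<^sup>2 * ?f\<^sup>2 * (op_norm E * lK)"
    using norm_query_step_term_le[of ?A E "X ** WK ** transpose WK ** P"]
      mult_left_mono[OF cube[OF norm_ge_zero lK] op_norm_nonneg[of E]]
    by (simp add: mult_ac)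
  have T2: "norm ?T2 \<le> ?s\<^sup>2 * ?f\<^sup>2 * (op_norm E * lQ)"
    using norm_key_step_term_le[of ?A "X ** WQ ** transpose WQ ** P" E]
      mult_left_mono[OF cube[OF norm_ge_zero lQ] op_norm_nonneg[of E]]
    by (simp add: mult_ac)
  have "?s\<^sup>2 * ?s\<^sup>2 \<le> ?s\<^sup>2 * ?f\<^sup>2"
    using s by (intro mult_left_mono power_mono) simp_all
  then have T3: "norm ?T3 \<le> ?s\<^sup>2 * ?f\<^sup>2 * ((op_norm E)\<^sup>2 * norm (X ** WK) * norm (X ** WQ))"
    using norm_cross_term_le[of ?A E "X ** WK" "X ** WQ"]
      mult_right_mono[of "?s\<^sup>2 * ?s\<^sup>2" "?s\<^sup>2 * ?f\<^sup>2"
        "(op_norm E)\<^sup>2 * norm (X ** WK) * norm (X ** WQ)"]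
    by (simp add: mult_ac)
  have "norm ((a * b) *\<^sub>R ?T3 - a *\<^sub>R ?T1 - b *\<^sub>R ?T2)
      \<le> a * b * norm ?T3 + a * norm ?T1 + b * norm ?T2"
    using norm_triangle_ineq4[of "(a * b) *\<^sub>R ?T3 - a *\<^sub>R ?T1" "b *\<^sub>R ?T2"]
      norm_triangle_ineq4[of "(a * b) *\<^sub>R ?T3" "a *\<^sub>R ?T1"] a b
    by simp
  also have "\<dots> \<le> a * b * (?s\<^sup>2 * ?f\<^sup>2 * ((op_norm E)\<^sup>2 * norm (X ** WK) * norm (X ** WQ)))
      + a * (?s\<^sup>2 * ?f\<^sup>2 * (op_norm E * lK)) + b * (?s\<^sup>2 * ?f\<^sup>2 * (op_norm E * lQ))"
    using a b by (intro add_mono mult_left_mono T1 T2 T3) simp_all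
  finally show ?thesis
    unfolding projected_score_update_eq[OF P] by (simp add: algebra_simps)
qed

lemma powr_three_halves: "0 \<le> x \<Longrightarrow> x powr (3/2) = x * sqrt (x :: real)"
  using powr_add[of x 1 "1/2"] by (simp add: powr_half_sqrt)

lemma norm_scaled_projected_score_update_le:
  fixes X :: "real^'d^'n" and WQ WK :: "real^'k^'d" and E :: "real^'n^'n"
  assumes P: "orth_projector P" and etaQ: "0 \<le> etaQ" and etaK: "0 \<le> etaK" and dk: "0 < dk"
    and lQ: "norm (X ** WQ ** transpose WQ ** P) \<le> lQ * norm (X ** P)"
    and lK: "norm (X ** WK ** transpose WK ** P) \<le> lK * norm (X ** P)"
  shows "norm ((1 / sqrt dk) *\<^sub>R projected_score_update X E P WQ WK (etaQ / sqrt dk) (etaK / sqrt dk))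
    \<le> (op_norm (X ** P))\<^sup>2 * (norm (X ** P))\<^sup>2 * op_norm E / dk * (etaQ * lK + etaK * lQ)
      + etaQ * etaK * (op_norm (X ** P))\<^sup>2 * (norm (X ** P))\<^sup>2 * (op_norm E)\<^sup>2
        * norm (X ** WK) * norm (X ** WQ) / dk powr (3/2)"
proof -
  define c where "c = 1 / sqrt dk"
  have c: "0 \<le> c" and c2: "c^2 = 1 / dk" and c3: "c^3 = 1 / dk powr (3/2)"
    using dk by (simp_all add: c_def powr_three_halves power3_eq_cube power2_eq_square)
  have "norm (c *\<^sub>R projected_score_update X E P WQ WK (etaQ * c) (etaK * c))
    \<le> c^2 * ((op_norm (X ** P))\<^sup>2 * (norm (X ** P))\<^sup>2 * op_norm E * (etaQ * lK + etaK * lQ))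
      + c^3 * (etaQ * etaK * (op_norm (X ** P))\<^sup>2 * (norm (X ** P))\<^sup>2 * (op_norm E)\<^sup>2
        * norm (X ** WK) * norm (X ** WQ))"
    using mult_left_mono[OF norm_projected_score_update_le[OF P mult_nonneg_nonneg[OF etaQ c]
        mult_nonneg_nonneg[OF etaK c] lQ lK, where E = E] c] c
    by (simp add: algebra_simps power2_eq_square power3_eq_cube)
  then show ?thesis
    unfolding c2 c3 by (simp add: c_def)
qed

theorem corollary2:
  fixes X :: "real^'d^'n" and WQ WK :: "real^'k^'d" and E :: "real^'n^'n"
    and P :: "real^'d^'d" and etaQ etaK lamQ lamK :: real
  assumes P: "orth_projector P"
    and etaQ: "etaQ \<ge> 0" and etaK: "etaK \<ge> 0"
    and lamQ: "lamQ \<ge> 0" and lamK: "lamK \<ge> 0"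
    and hQ: "frob_norm (X ** WQ ** transpose WQ ** P) \<le> lamQ * frob_norm (X ** P) * (op_norm WQ)\<^sup>2"
    and hK: "frob_norm (X ** WK ** transpose WK ** P) \<le> lamK * frob_norm (X ** P) * (op_norm WK)\<^sup>2"
  shows
   "let dk = real CARD('k); B = WQ ** transpose WK; XP = X ** P;
        GQ = (1 / sqrt dk) *\<^sub>R (transpose X ** E ** X ** WK);
        GK = (1 / sqrt dk) *\<^sub>R (transpose X ** transpose E ** X ** WQ);
        Bplus = (WQ - etaQ *\<^sub>R GQ) ** transpose (WK - etaK *\<^sub>R GK);
        DZ = (1 / sqrt dk) *\<^sub>R (XP ** P ** (Bplus - B) ** P ** transpose XP);
        R2 = etaQ * etaK * (op_norm XP)\<^sup>2 * (frob_norm XP)\<^sup>2 * (op_norm E)\<^sup>2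
               * frob_norm (X ** WK) * frob_norm (X ** WQ) / dk powr (3/2);
        first = (op_norm XP)\<^sup>2 * (frob_norm XP)\<^sup>2 * op_norm E / dk
               * (etaQ * lamK * (op_norm WK)\<^sup>2 + etaK * lamQ * (op_norm WQ)\<^sup>2)
    in frob_norm DZ \<le> first + R2
       \<and> first \<le> (frob_norm XP)^4 * op_norm E / dk
               * (etaQ * lamK * (op_norm WK)\<^sup>2 + etaK * lamQ * (op_norm WQ)\<^sup>2)"
proof -
  define dk where "dk = real CARD('k)"
  define s f where "s = op_norm (X ** P)" and "f = norm (X ** P)"
  define S where "S = etaQ * lamK * (op_norm WK)\<^sup>2 + etaK * lamQ * (op_norm WQ)\<^sup>2"
  have dk: "0 < dk"
    unfolding dk_def by simp
  have lQ: "norm (X ** WQ ** transpose WQ ** P) \<le> (lamQ * (op_norm WQ)\<^sup>2) * norm (X ** P)"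
    and lK: "norm (X ** WK ** transpose WK ** P) \<le> (lamK * (op_norm WK)\<^sup>2) * norm (X ** P)"
    using hQ hK by (simp_all add: frob_norm_eq_norm mult_ac)
  have "s\<^sup>2 * f\<^sup>2 \<le> f\<^sup>2 * f\<^sup>2"
    unfolding s_def f_def by (intro mult_right_mono power_mono op_norm_le_norm op_norm_nonneg) simp
  then have "s\<^sup>2 * f\<^sup>2 * op_norm E / dk * S \<le> f^4 * op_norm E / dk * S"
    using etaQ etaK lamQ lamK dk unfolding S_def
    by (intro mult_right_mono divide_right_mono) (simp_all add: op_norm_nonneg)
  with norm_scaled_projected_score_update_le[OF P etaQ etaK dk lQ lK, where E = E] show ?thesis
    unfolding Let_def frob_norm_eq_norm projected_score_update_def s_def f_def S_def dk_def
    by (simp add: scaleR_scaleR mult_ac)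
qed

end
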